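(* Fix $\rho>1$ and $q\in(0,1)$. For $x,y\in[0,\infty)$ define $$x\oplus_q y=\sup_{p\in[0,1]\cap\mathbb{Q}}\rho^{-\mathrm{KL}(p;q)}x^py^{1-p},\qquad \mathrm{KL}(p;q)=p\log\frac{p}{q}+(1-p)\log\frac{1-p}{1-q}.$$ Then $x\oplus_q y=y\oplus_{1-q}x$ for all $x,y\in[0,\infty)$, and the operation $\oplus_q$ is commutative on $[0,\infty)$ (i.e. $x\oplus_q y=y\oplus_q x$ for all $x,y\ge0$) if and only if $q=1/2$.
   Context: $\log$ is the natural logarithm, $0\log 0:=0$, $0^0:=1$. $\mathrm{KL}(p;q)$ is the Kullback–Leibler divergence of the binary distributions $(p,1-p)$ and $(q,1-q)$. *)

theory Defs
  imports Complex_Main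
begin

definition KL :: "real \<Rightarrow> real \<Rightarrow> real" where
  "KL p q = (if p = 0 then 0 else p * ln (p / q))
          + (if 1 - p = 0 then 0 else (1 - p) * ln ((1 - p) / (1 - q)))"

text \<open>Real power with the convention 0^0 = 1 (HOL's powr has 0 powr 0 = 0).\<close>
definition rpow :: "real \<Rightarrow> real \<Rightarrow> real" where
  "rpow x p = (if p = 0 then 1 else x powr p)"

definition oplus :: "real \<Rightarrow> real \<Rightarrow> real \<Rightarrow> real \<Rightarrow> real" where
  "oplus \<rho> q x y =
     (SUP p \<in> {p. p \<in> \<rat> \<and> 0 \<le> p \<and> p \<le> 1}.
        \<rho> powr (- KL p q) * rpow x p * rpow y (1 - p))"

end

theory Submission
  imports Defs
begin

text \<open>Reflecting the exponent \<open>p \<mapsto> 1 - p\<close> maps the rationals of \<open>[0,1]\<close> onto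
  themselves and turns \<open>KL(p;q)\<close> into \<open>KL(1-p;1-q)\<close>, which gives the duality between
  \<open>q\<close> and \<open>1 - q\<close>. At \<open>(x,y) = (1,0)\<close> only the exponent \<open>p = 1\<close> contributes, so
  \<open>1 \<oplus>\<^sub>q 0 = \<rho> powr ln q\<close>; commutativity together with the duality then forces
  \<open>ln q = ln (1 - q)\<close>, i.e. \<open>q = 1/2\<close>.\<close>

lemma KL_one_minus: "KL (1 - p) (1 - q) = KL p q"
  unfolding KL_def by (simp add: add.commute)

lemma one_minus_image_rat_unit_interval:
  "(\<lambda>p. 1 - p) ` {p :: real. p \<in> \<rat> \<and> 0 \<le> p \<and> p \<le> 1} = {p. p \<in> \<rat> \<and> 0 \<le> p \<and> p \<le> 1}"
  by (force intro: image_eqI[where x = "1 - p" for p])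

lemma oplus_swap: "oplus \<rho> q x y = oplus \<rho> (1 - q) y x"
proof -
  let ?S = "{p :: real. p \<in> \<rat> \<and> 0 \<le> p \<and> p \<le> 1}"
  have "oplus \<rho> (1 - q) y x
      = (SUP p \<in> (\<lambda>p. 1 - p) ` ?S. \<rho> powr (- KL p (1 - q)) * rpow y p * rpow x (1 - p))"
    unfolding oplus_def one_minus_image_rat_unit_interval ..
  also have "\<dots> = (SUP p \<in> ?S. \<rho> powr (- KL (1 - p) (1 - q)) * rpow y (1 - p) * rpow x p)"
    by (simp add: image_image)
  also have "\<dots> = oplus \<rho> q x y"
    unfolding oplus_def KL_one_minus by (simp add: mult_ac)
  finally show ?thesis ..
qed

lemma oplus_one_zero:
  assumes "\<rho> > 0" "q > 0"
  shows "oplus \<rho> q 1 0 = \<rho> powr ln q"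
proof -
  let ?S = "{p :: real. p \<in> \<rat> \<and> 0 \<le> p \<and> p \<le> 1}"
  have term_eq: "\<rho> powr (- KL p q) * rpow 1 p * rpow 0 (1 - p) = (if p = 1 then \<rho> powr ln q else 0)"
    for p using assms by (simp add: KL_def rpow_def ln_div)
  have "(\<lambda>p. if p = 1 then \<rho> powr ln q else 0) ` ?S = {\<rho> powr ln q, 0}"
    by (force intro: image_eqI[where x = 1] image_eqI[where x = 0])
  then have "oplus \<rho> q 1 0 = Sup {\<rho> powr ln q, 0}"
    unfolding oplus_def term_eq by simp
  also have "\<dots> = \<rho> powr ln q"
    using assms by (intro cSup_eq_maximum) auto
  finally show ?thesis .
qed

theorem proposition8p3:
  fixes \<rho> q :: real
  assumes "\<rho> > 1" and "0 < q" and "q < 1"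
  shows "(\<forall>x y. x \<ge> 0 \<longrightarrow> y \<ge> 0 \<longrightarrow> oplus \<rho> q x y = oplus \<rho> (1 - q) y x)
       \<and> ((\<forall>x y. x \<ge> 0 \<longrightarrow> y \<ge> 0 \<longrightarrow> oplus \<rho> q x y = oplus \<rho> q y x) \<longleftrightarrow> q = 1/2)"
proof (intro conjI allI impI iffI)
  fix x y show "oplus \<rho> q x y = oplus \<rho> (1 - q) y x" by (rule oplus_swap)
next
  fix x y :: real assume "q = 1/2"
  then have "1 - q = q" by simp
  then show "oplus \<rho> q x y = oplus \<rho> q y x" using oplus_swap[of \<rho> q x y] by metis
next
  assume "\<forall>x y. x \<ge> 0 \<longrightarrow> y \<ge> 0 \<longrightarrow> oplus \<rho> q x y = oplus \<rho> q y x"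
  then have "oplus \<rho> q 1 0 = oplus \<rho> (1 - q) 1 0"
    using oplus_swap[of \<rho> q 0 1] by simp
  then have "\<rho> powr ln q = \<rho> powr ln (1 - q)"
    using assms by (simp add: oplus_one_zero)
  then have "ln q = ln (1 - q)"
    using assms by (simp add: powr_inj)
  then show "q = 1/2"
    using assms by simp
qed

end
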